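(* In the model and protocol $\mathrm{OciorABA}^*$ described in the context, with $n\ge 3t+1$ and every honest node receiving an input message, all $n$ instances $\mathrm{ABBA}_1,\dots,\mathrm{ABBA}_n$ eventually deliver outputs at every honest node.
   Context: Model: there are $n$ nodes $\mathrm{Node}_1,\dots,\mathrm{Node}_n$ in an asynchronous network (every message sent between honest nodes is eventually delivered, with arbitrary adversarial delay). An adaptive adversary may corrupt (make dishonest/Byzantine) at most $t$ nodes in total; $\mathcal F\subseteq[1:n]$ denotes the set of dishonest nodes; $n\ge 3t+1$. Primitives used as black boxes: (RBC) For each $j\in[1:n]$ there is a reliable broadcast instance $\mathrm{RBC}_j$ with leader $\mathrm{Node}_j$, satisfying: Consistency (if two honest nodes output $w',w''$ then $w'=w''$); Validity (if the leader is honest and inputs $w$, every honest node eventually outputs $w$); Totality (if one honest node outputs a value, every honest node eventually outputs a value). (ABBA) For each $j\in[1:n]$ there is a binary Byzantine agreement instance $\mathrm{ABBA}_j$ (inputs and outputs in $\{0,1\}$), satisfying: Termination (if all honest nodes provide inputs, every honest node eventually outputs a value and terminates); Consistency (if an honest node outputs $b$, every honest node eventually outputs $b$); Validity (if all honest nodes input the same $b$, every honest node eventually outputs $b$). (Erasure code) An $(n,t+1)$ erasure code over an alphabet $\Sigma$: an encoder $\mathrm{Enc}$ mapping a message $w$ to $(\mathrm{Enc}_1(w),\dots,\mathrm{Enc}_n(w))\in\Sigma^n$ and a decoder $\mathrm{Dec}$ such that for every set $K\subseteq[1:n]$ with $|K|=t+1$, $\mathrm{Dec}(\{\mathrm{Enc}_j(w)\}_{j\in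 K})=w$. Protocol $\mathrm{OciorABA}^*$, code for an honest $\mathrm{Node}_i$ with input message $w_i$: (1) Compute $(y^{(i)}_1,\dots,y^{(i)}_n)=\mathrm{Enc}(w_i)$ and input $y^{(i)}_i$ into $\mathrm{RBC}_i$ (as leader). (2) Upon delivery of a value $y^{(j)}_j$ from $\mathrm{RBC}_j$ (after step (1) has been executed), if $\mathrm{Node}_i$ has not yet given an input to $\mathrm{ABBA}_j$: set $a_i[j]=1$ if $y^{(j)}_j=y^{(i)}_j$ and $a_i[j]=0$ otherwise, and input $a_i[j]$ into $\mathrm{ABBA}_j$. (3) Upon obtaining outputs from $n-t$ of the instances $\mathrm{ABBA}_1,\dots,\mathrm{ABBA}_n$, input $0$ into every $\mathrm{ABBA}_j$ to which $\mathrm{Node}_i$ has not yet given an input. (4) Upon obtaining outputs from all $n$ ABBA instances: let $S=\{j:\mathrm{ABBA}_j\text{ output }1\}$. If $|S|<t+1$, output a default value $\bot$ and terminate. Otherwise let $K$ be the set of the $t+1$ smallest elements of $S$, wait for delivery of $y^{(j)}_j$ from $\mathrm{RBC}_j$ for all $j\in K$, output $\mathrm{Dec}(\{y^{(j)}_j\}_{j\in K})$ and terminate. *)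

theory Defs
  imports Main
begin

text \<open>Nodes and protocol instances are indexed by
  {1..n}.  Time is discrete (nat); "eventually" means "at some finite time".
  An event of node i is recorded as an option value: None = never happens,
  Some (s, v) = happens at time s with value v.  F is the set of nodes that are
  (ever) corrupted; honest nodes are {1..n} - F.  ABBA bits are bool
  (True = 1, False = 0).\<close>

definition honest :: "nat \<Rightarrow> nat set \<Rightarrow> nat set" where
  "honest n F = {1..n} - F"

definition erasure_code ::
  "nat \<Rightarrow> nat \<Rightarrow> ('m \<Rightarrow> nat \<Rightarrow> 's) \<Rightarrow> ((nat \<Rightarrow> 's option) \<Rightarrow> 'm) \<Rightarrow> bool" where
  "erasure_code n t Enc Dec \<longleftrightarrow>
     (\<forall>w K. K \<subseteq> {1..n} \<longrightarrow> card K = t + 1 \<longrightarrow>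
        Dec (\<lambda>j. if j \<in> K then Some (Enc w j) else None) = w)"

text \<open>RBC properties. rbc_in j = input of leader j into RBC_j;
  rbc_del i j = output of RBC_j at node i.\<close>
definition rbc_props ::
  "nat \<Rightarrow> nat set \<Rightarrow> (nat \<Rightarrow> (nat \<times> 'v) option) \<Rightarrow> (nat \<Rightarrow> nat \<Rightarrow> (nat \<times> 'v) option) \<Rightarrow> bool" where
  "rbc_props n F rbc_in rbc_del \<longleftrightarrow>
    (\<forall>j\<in>{1..n}.
      \<comment> \<open>Consistency\<close>
      (\<forall>i1\<in>honest n F. \<forall>i2\<in>honest n F. \<forall>s1 s2 v1 v2.
          rbc_del i1 j = Some (s1, v1) \<longrightarrow> rbc_del i2 j = Some (s2, v2) \<longrightarrow> v1 = v2) \<and>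
      \<comment> \<open>Validity\<close>
      (j \<in> honest n F \<longrightarrow> (\<forall>s w. rbc_in j = Some (s, w) \<longrightarrow>
          (\<forall>i\<in>honest n F. \<exists>s'. rbc_del i j = Some (s', w)))) \<and>
      \<comment> \<open>Totality\<close>
      ((\<exists>i\<in>honest n F. rbc_del i j \<noteq> None) \<longrightarrow> (\<forall>i\<in>honest n F. rbc_del i j \<noteq> None)))"

text \<open>ABBA properties. abba_in i j / abba_out i j = input / output of node i
  in ABBA_j.\<close>
definition abba_props ::
  "nat \<Rightarrow> nat set \<Rightarrow> (nat \<Rightarrow> nat \<Rightarrow> (nat \<times> bool) option) \<Rightarrow> (nat \<Rightarrow> nat \<Rightarrow> (nat \<times> bool) option) \<Rightarrow> bool" where
  "abba_props n F abba_in abba_out \<longleftrightarrow>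
    (\<forall>j\<in>{1..n}.
      \<comment> \<open>Termination\<close>
      ((\<forall>i\<in>honest n F. abba_in i j \<noteq> None) \<longrightarrow> (\<forall>i\<in>honest n F. abba_out i j \<noteq> None)) \<and>
      \<comment> \<open>Consistency\<close>
      (\<forall>i1\<in>honest n F. \<forall>s1 b. abba_out i1 j = Some (s1, b) \<longrightarrow>
          (\<forall>i2\<in>honest n F. \<exists>s2. abba_out i2 j = Some (s2, b))) \<and>
      \<comment> \<open>Validity\<close>
      (\<forall>b. (\<forall>i\<in>honest n F. \<exists>s. abba_in i j = Some (s, b)) \<longrightarrow>
          (\<forall>i\<in>honest n F. \<exists>s. abba_out i j = Some (s, b))))"

definition outs_by ::
  "nat \<Rightarrow> (nat \<Rightarrow> nat \<Rightarrow> (nat \<times> bool) option) \<Rightarrow> nat \<Rightarrow> nat \<Rightarrow> nat" where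
  "outs_by n abba_out i s = card {j\<in>{1..n}. \<exists>s' b. abba_out i j = Some (s', b) \<and> s' \<le> s}"

text \<open>Code of OciorABA* for an honest node i with input w i, executing step (1)
  at time st i.  Step (4) only concerns the final output, not ABBA inputs.\<close>
definition ocior_node ::
  "nat \<Rightarrow> nat \<Rightarrow> ('m \<Rightarrow> nat \<Rightarrow> 's) \<Rightarrow> ('m) \<Rightarrow> nat \<Rightarrow> nat
   \<Rightarrow> (nat \<Rightarrow> (nat \<times> 's) option) \<Rightarrow> (nat \<Rightarrow> nat \<Rightarrow> (nat \<times> 's) option)
   \<Rightarrow> (nat \<Rightarrow> nat \<Rightarrow> (nat \<times> bool) option) \<Rightarrow> (nat \<Rightarrow> nat \<Rightarrow> (nat \<times> bool) option) \<Rightarrow> bool" where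
  "ocior_node n t Enc wi sti i rbc_in rbc_del abba_in abba_out \<longleftrightarrow>
     \<comment> \<open>(1) input own coded symbol into RBC_i\<close>
     rbc_in i = Some (sti, Enc wi i) \<and>
     \<comment> \<open>(2) upon delivery from RBC_j (after step 1), an ABBA_j input is given by then\<close>
     (\<forall>j\<in>{1..n}. \<forall>s y. rbc_del i j = Some (s, y) \<longrightarrow>
        (\<exists>s' b. abba_in i j = Some (s', b) \<and> s' \<le> max s sti)) \<and>
     \<comment> \<open>(3) upon n-t ABBA outputs, inputs to all ABBAs are given by then\<close>
     (\<forall>s. n - t \<le> outs_by n abba_out i s \<longrightarrow>
        (\<forall>j\<in>{1..n}. \<exists>s' b. abba_in i j = Some (s', b) \<and> s' \<le> s)) \<and>
     \<comment> \<open>ABBA inputs arise only from step (2) or step (3)\<close>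
     (\<forall>j\<in>{1..n}. \<forall>s b. abba_in i j = Some (s, b) \<longrightarrow>
        (\<exists>s0 y. rbc_del i j = Some (s0, y) \<and> s = max s0 sti \<and> b = (y = Enc wi j)) \<or>
        (b = False \<and> n - t \<le> outs_by n abba_out i s))"

end

theory Submission
  imports Defs
begin

text \<open>Every honest leader's coded symbol is delivered at every honest node, so every
  honest node inputs into the ABBA instances of honest leaders, and these terminate.
  There are at least \<open>n - t\<close> honest leaders, so each honest node eventually sees
  \<open>n - t\<close> ABBA outputs and then, by step (3), inputs into all remaining instances;
  termination of ABBA finishes the argument.  Note that only \<open>card F \<le> t\<close> is needed,
  not the resilience bound \<open>n \<ge> 3t + 1\<close>.\<close>

lemma card_honest_ge:
  assumes "F \<subseteq> {1..n}" and "card F \<le> t"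
  shows "n - t \<le> card (honest n F)"
proof -
  have "card (honest n F) = n - card F"
    unfolding honest_def using assms(1) by (simp add: card_Diff_subset finite_subset)
  with assms(2) show ?thesis by linarith
qed

lemma honest_subset: "honest n F \<subseteq> {1..n}"
  unfolding honest_def by auto

lemma outs_by_ge_card:
  assumes "A \<subseteq> {1..n}" and "\<forall>k\<in>A. abba_out i k \<noteq> None"
  shows "\<exists>s. card A \<le> outs_by n abba_out i s"
proof
  have "finite A" using assms(1) finite_subset by blast
  define s where "s = Max ((\<lambda>k. fst (the (abba_out i k))) ` A)"
  have "A \<subseteq> {j\<in>{1..n}. \<exists>s' b. abba_out i j = Some (s', b) \<and> s' \<le> s}"
  proof
    fix k assume k: "k \<in> A"
    then obtain s' b where out: "abba_out i k = Some (s', b)" using assms(2) by fastforce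
    have "s' \<le> s" unfolding s_def using \<open>finite A\<close> k out
      by (metis Max_ge finite_imageI fst_conv image_eqI option.sel)
    with out k assms(1) show "k \<in> {j\<in>{1..n}. \<exists>s' b. abba_out i j = Some (s', b) \<and> s' \<le> s}"
      by auto
  qed
  then show "card A \<le> outs_by n abba_out i s"
    unfolding outs_by_def by (rule card_mono[rotated]) simp
qed

lemma abba_out_if_all_honest_input:
  assumes "abba_props n F abba_in abba_out" and "j \<in> {1..n}"
    and "\<forall>k\<in>honest n F. abba_in k j \<noteq> None" and "i \<in> honest n F"
  shows "abba_out i j \<noteq> None"
  using assms unfolding abba_props_def by blast

lemma abba_in_of_honest_leader:
  assumes "rbc_props n F rbc_in rbc_del"
    and "\<forall>i\<in>honest n F. ocior_node n t Enc (w i) (st i) i rbc_in rbc_del abba_in abba_out"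
    and "j \<in> honest n F" and "k \<in> honest n F"
  shows "abba_in k j \<noteq> None"
proof -
  have j: "j \<in> {1..n}" using assms(3) honest_subset by blast
  have "rbc_in j = Some (st j, Enc (w j) j)"
    using assms(2,3) unfolding ocior_node_def by blast
  with assms(1,3,4) j obtain s where "rbc_del k j = Some (s, Enc (w j) j)"
    unfolding rbc_props_def by blast
  with assms(2,4) j show ?thesis unfolding ocior_node_def by fastforce
qed

lemma abba_in_all_if_many_outputs:
  assumes "ocior_node n t Enc wi sti i rbc_in rbc_del abba_in abba_out"
    and "n - t \<le> outs_by n abba_out i s" and "j \<in> {1..n}"
  shows "abba_in i j \<noteq> None"
  using assms unfolding ocior_node_def by blast

theorem lemma3:
  fixes n t :: nat and F :: "nat set"
    and Enc :: "'m \<Rightarrow> nat \<Rightarrow> 's" and Dec :: "(nat \<Rightarrow> 's option) \<Rightarrow> 'm"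
    and w :: "nat \<Rightarrow> 'm" and st :: "nat \<Rightarrow> nat"
    and rbc_in :: "nat \<Rightarrow> (nat \<times> 's) option"
    and rbc_del :: "nat \<Rightarrow> nat \<Rightarrow> (nat \<times> 's) option"
    and abba_in abba_out :: "nat \<Rightarrow> nat \<Rightarrow> (nat \<times> bool) option"
  assumes "n \<ge> 3 * t + 1"
    and "F \<subseteq> {1..n}" and "card F \<le> t"
    and "erasure_code n t Enc Dec"
    and "rbc_props n F rbc_in rbc_del"
    and "abba_props n F abba_in abba_out"
    and "\<forall>i\<in>honest n F. ocior_node n t Enc (w i) (st i) i rbc_in rbc_del abba_in abba_out"
  shows "\<forall>i\<in>honest n F. \<forall>j\<in>{1..n}. \<exists>s b. abba_out i j = Some (s, b)"
proof -
  have honest_leaders_out: "\<forall>k\<in>honest n F. abba_out i k \<noteq> None" if "i \<in> honest n F" for i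
    using abba_out_if_all_honest_input[OF assms(6)] abba_in_of_honest_leader[OF assms(5,7)]
      honest_subset that by blast
  have all_in: "abba_in i j \<noteq> None" if i: "i \<in> honest n F" and j: "j \<in> {1..n}" for i j
  proof -
    obtain s where "card (honest n F) \<le> outs_by n abba_out i s"
      using outs_by_ge_card[OF honest_subset, where abba_out = abba_out and i = i]
        honest_leaders_out[OF i] by blast
    with card_honest_ge[OF assms(2,3)] have "n - t \<le> outs_by n abba_out i s" by linarith
    with assms(7) i j show ?thesis by (metis abba_in_all_if_many_outputs)
  qed
  show ?thesis
    using abba_out_if_all_honest_input[OF assms(6)] all_in by fastforce
qed

end
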